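(* Let $Q=(Q_0,Q_1,h,t)$ be a quiver with no oriented cycles, and let $\mu$ be an increasing slope function on $\mathrm{mod}\text{-}\mathbb{C}Q$. Then for each $\boldsymbol d\in\mathbb{N}^{Q_0}\setminus\{0\}$, exactly one of the following holds: (a) $\boldsymbol d=\delta_v$ for some $v\in Q_0$. Then $\mathcal{M}^{\rm st}_{\boldsymbol d}(\mu)=\mathcal{M}^{\rm ss}_{\boldsymbol d}(\mu)$ is a single point $*$. (b) $\boldsymbol d\neq\delta_v$ for every $v\in Q_0$, and for some $t\in\mathbb{R}$ we have $\boldsymbol d(v)=0$ for all $v\in Q_0$ with $\mu_v\neq t$. Then $\mathcal{M}^{\rm st}_{\boldsymbol d}(\mu)=\emptyset$ and $\mathcal{M}^{\rm ss}_{\boldsymbol d}(\mu)\cong[*/\mathrm{PGL}_{\boldsymbol d}]$. Also $2-\chi(\boldsymbol d,\boldsymbol d)<0$ in this case. (c) Neither (a) nor (b) holds. Then $\mathcal{M}^{\rm st}_{\boldsymbol d}(\mu)=\mathcal{M}^{\rm ss}_{\boldsymbol d}(\mu)=\emptyset$.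
   Context: A quiver $Q=(Q_0,Q_1,h,t)$ is a finite directed graph with vertex set $Q_0$, edge set $Q_1$, head and tail maps $h,t:Q_1\to Q_0$. An oriented cycle is a closed loop of directed edges. A representation $(\boldsymbol V,\boldsymbol\rho)$ of $Q$ consists of finite-dimensional $\mathbb{C}$-vector spaces $V_v$ ($v\in Q_0$) and linear maps $\rho_e:V_{t(e)}\to V_{h(e)}$ ($e\in Q_1$); these form the $\mathbb{C}$-linear abelian category $\mathrm{mod}\text{-}\mathbb{C}Q$. Its dimension vector is $\boldsymbol d=\dim(\boldsymbol V,\boldsymbol\rho)\in\mathbb{N}^{Q_0}$, $\boldsymbol d(v)=\dim V_v$. For $v\in Q_0$, $\delta_v\in\mathbb{N}^{Q_0}$ has $\delta_v(v)=1$, $\delta_v(w)=0$ for $w\ne v$. For $\boldsymbol d\in\mathbb{N}^{Q_0}$ put $R_{\boldsymbol d}=\prod_{e\in Q_1}\mathrm{Hom}(\mathbb{C}^{\boldsymbol d(t(e))},\mathbb{C}^{\boldsymbol d(h(e))})$, $\mathrm{GL}_{\boldsymbol d}=\prod_{v\in Q_0}\mathrm{GL}(\boldsymbol d(v),\mathbb{C})$ acting by $(A_v)\cdot(B_e)=(A_{h(e)}B_eA_{t(e)}^{-1})$, and $\mathrm{PGL}_{\boldsymbol d}=\mathrm{GL}_{\boldsymbol d}/\mathbb{G}_m$, where $\mathbb{G}_m$ is the diagonal scalars. The projective linear moduli stack of representations of dimension $\boldsymbol d$ is the quotient stack $\mathcal{M}^{\rm pl}_{\boldsymbol d}=[R_{\boldsymbol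 d}/\mathrm{PGL}_{\boldsymbol d}]$. A slope function $\mu$ is given by real numbers $(\mu_v)_{v\in Q_0}$ via $\mu(\boldsymbol d)=\sum_v\mu_v\boldsymbol d(v)/\sum_v\boldsymbol d(v)$ for $\boldsymbol d\in\mathbb{N}^{Q_0}\setminus\{0\}$. A nonzero object $E$ is $\mu$-stable (resp. $\mu$-semistable) if for every subobject $0\neq E'\subsetneq E$ we have $\mu(\dim E')<\mu(\dim E/E')$ (resp. $\le$). $\mathcal{M}^{\rm st}_{\boldsymbol d}(\mu)\subseteq\mathcal{M}^{\rm ss}_{\boldsymbol d}(\mu)\subseteq\mathcal{M}^{\rm pl}_{\boldsymbol d}$ denote the open substacks of $\mu$-stable, resp. $\mu$-semistable, representations of dimension $\boldsymbol d$. The slope function $\mu$ is called increasing if $\mu_v<\mu_w$ for every edge $v\to w$ in $Q$. The Euler form is $\chi_Q(\boldsymbol d,\boldsymbol e)=\sum_{v\in Q_0}\boldsymbol d(v)\boldsymbol e(v)-\sum_{e\in Q_1}\boldsymbol d(t(e))\boldsymbol e(h(e))$, and $\chi(\boldsymbol d,\boldsymbol e)=\chi_Q(\boldsymbol d,\boldsymbol e)+\chi_Q(\boldsymbol e,\boldsymbol d)$. *)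

theory Defs
  imports Complex_Main
begin

text \<open>Vectors of C^n are functions nat \<Rightarrow> complex vanishing from index n on;
  linear maps C^m \<rightarrow> C^n are matrices nat \<Rightarrow> nat \<Rightarrow> complex
  (entry (i,j) for i < n, j < m, zero elsewhere).\<close>

definition no_oriented_cycles :: "('e \<Rightarrow> 'v) \<Rightarrow> ('e \<Rightarrow> 'v) \<Rightarrow> bool" where
  "no_oriented_cycles h t \<longleftrightarrow>
     \<not> (\<exists>es. es \<noteq> [] \<and> (\<forall>i. Suc i < length es \<longrightarrow> h (es ! i) = t (es ! Suc i))
              \<and> h (last es) = t (hd es))"

definition increasing_slope :: "('e \<Rightarrow> 'v) \<Rightarrow> ('e \<Rightarrow> 'v) \<Rightarrow> ('v \<Rightarrow> real) \<Rightarrow> bool" where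
  "increasing_slope h t \<mu> \<longleftrightarrow> (\<forall>e. \<mu> (t e) < \<mu> (h e))"

definition slope :: "('v::finite \<Rightarrow> real) \<Rightarrow> ('v \<Rightarrow> nat) \<Rightarrow> real" where
  "slope \<mu> d = (\<Sum>v\<in>UNIV. \<mu> v * real (d v)) / (\<Sum>v\<in>UNIV. real (d v))"

definition delta :: "'v \<Rightarrow> 'v \<Rightarrow> nat" where
  "delta v = (\<lambda>w. if w = v then 1 else 0)"

definition cvecs :: "nat \<Rightarrow> (nat \<Rightarrow> complex) set" where
  "cvecs n = {x. \<forall>i\<ge>n. x i = 0}"

definition cspan :: "(nat \<Rightarrow> complex) set \<Rightarrow> (nat \<Rightarrow> complex) set" where
  "cspan S = {x. \<exists>c. x = (\<lambda>i. \<Sum>s\<in>S. c s * s i)}"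

definition csubspace :: "(nat \<Rightarrow> complex) set \<Rightarrow> nat \<Rightarrow> bool" where
  "csubspace W n \<longleftrightarrow> W \<subseteq> cvecs n \<and> (\<lambda>i. 0) \<in> W \<and>
     (\<forall>x\<in>W. \<forall>y\<in>W. (\<lambda>i. x i + y i) \<in> W) \<and> (\<forall>c. \<forall>x\<in>W. (\<lambda>i. c * x i) \<in> W)"

definition cdim :: "(nat \<Rightarrow> complex) set \<Rightarrow> nat" where
  "cdim W = (LEAST k. \<exists>S. finite S \<and> card S = k \<and> S \<subseteq> W \<and> W = cspan S)"

definition mapply :: "(nat \<Rightarrow> nat \<Rightarrow> complex) \<Rightarrow> nat \<Rightarrow> (nat \<Rightarrow> complex) \<Rightarrow> (nat \<Rightarrow> complex)" where
  "mapply A m x = (\<lambda>i. \<Sum>j<m. A i j * x j)"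

definition Rep :: "('e \<Rightarrow> 'v) \<Rightarrow> ('e \<Rightarrow> 'v) \<Rightarrow> ('v \<Rightarrow> nat) \<Rightarrow> ('e \<Rightarrow> nat \<Rightarrow> nat \<Rightarrow> complex) set" where
  "Rep h t d = {B. \<forall>e i j. (d (h e) \<le> i \<or> d (t e) \<le> j) \<longrightarrow> B e i j = 0}"

definition subrep :: "('e \<Rightarrow> 'v) \<Rightarrow> ('e \<Rightarrow> 'v) \<Rightarrow> ('v \<Rightarrow> nat) \<Rightarrow> ('e \<Rightarrow> nat \<Rightarrow> nat \<Rightarrow> complex)
     \<Rightarrow> ('v \<Rightarrow> (nat \<Rightarrow> complex) set) \<Rightarrow> bool" where
  "subrep h t d B W \<longleftrightarrow> (\<forall>v. csubspace (W v) (d v)) \<and>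
     (\<forall>e. \<forall>x\<in>W (t e). mapply (B e) (d (t e)) x \<in> W (h e))"

definition stable_rep :: "('e \<Rightarrow> 'v) \<Rightarrow> ('e \<Rightarrow> 'v::finite) \<Rightarrow> ('v \<Rightarrow> real) \<Rightarrow> ('v \<Rightarrow> nat)
     \<Rightarrow> ('e \<Rightarrow> nat \<Rightarrow> nat \<Rightarrow> complex) \<Rightarrow> bool" where
  "stable_rep h t \<mu> d B \<longleftrightarrow> B \<in> Rep h t d \<and> d \<noteq> (\<lambda>v. 0) \<and>
     (\<forall>W. subrep h t d B W \<longrightarrow> (\<lambda>v. cdim (W v)) \<noteq> (\<lambda>v. 0) \<longrightarrow> (\<lambda>v. cdim (W v)) \<noteq> d \<longrightarrow>
        slope \<mu> (\<lambda>v. cdim (W v)) < slope \<mu> (\<lambda>v. d v - cdim (W v)))"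

definition semistable_rep :: "('e \<Rightarrow> 'v) \<Rightarrow> ('e \<Rightarrow> 'v::finite) \<Rightarrow> ('v \<Rightarrow> real) \<Rightarrow> ('v \<Rightarrow> nat)
     \<Rightarrow> ('e \<Rightarrow> nat \<Rightarrow> nat \<Rightarrow> complex) \<Rightarrow> bool" where
  "semistable_rep h t \<mu> d B \<longleftrightarrow> B \<in> Rep h t d \<and> d \<noteq> (\<lambda>v. 0) \<and>
     (\<forall>W. subrep h t d B W \<longrightarrow> (\<lambda>v. cdim (W v)) \<noteq> (\<lambda>v. 0) \<longrightarrow> (\<lambda>v. cdim (W v)) \<noteq> d \<longrightarrow>
        slope \<mu> (\<lambda>v. cdim (W v)) \<le> slope \<mu> (\<lambda>v. d v - cdim (W v)))"

text \<open>The stable / semistable loci in R_d (the atlases of M^st_d, M^ss_d).\<close>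
definition Mst where "Mst h t \<mu> d = {B \<in> Rep h t d. stable_rep h t \<mu> d B}"
definition Mss where "Mss h t \<mu> d = {B \<in> Rep h t d. semistable_rep h t \<mu> d B}"

definition chiQ :: "('e::finite \<Rightarrow> 'v) \<Rightarrow> ('e \<Rightarrow> 'v::finite) \<Rightarrow> ('v \<Rightarrow> nat) \<Rightarrow> ('v \<Rightarrow> nat) \<Rightarrow> int" where
  "chiQ h t d e = (\<Sum>v\<in>UNIV. int (d v) * int (e v)) - (\<Sum>a\<in>UNIV. int (d (t a)) * int (e (h a)))"

definition chi :: "('e::finite \<Rightarrow> 'v) \<Rightarrow> ('e \<Rightarrow> 'v::finite) \<Rightarrow> ('v \<Rightarrow> nat) \<Rightarrow> ('v \<Rightarrow> nat) \<Rightarrow> int" where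
  "chi h t d e = chiQ h t d e + chiQ h t e d"

definition caseA :: "('v \<Rightarrow> nat) \<Rightarrow> bool" where
  "caseA d \<longleftrightarrow> (\<exists>v. d = delta v)"

definition caseB :: "('v \<Rightarrow> real) \<Rightarrow> ('v \<Rightarrow> nat) \<Rightarrow> bool" where
  "caseB \<mu> d \<longleftrightarrow> (\<forall>v. d \<noteq> delta v) \<and> (\<exists>r::real. \<forall>v. \<mu> v \<noteq> r \<longrightarrow> d v = 0)"

end

(*
  Because \<mu> increases strictly along every arrow, an arrow never joins two vertices of the
  same slope. If the support of d lies in one level set of \<mu>, then no arrow joins two vertices
  of the support, so R_d is the single point 0. The zero representation is semistable since every
  subobject and quotient has the same slope. It is stable exactly when d is a unit vector,
  because otherwise a line at one vertex is a proper subrepresentation of the same slope.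
  If the support meets several levels, take a vertex v of maximal slope in the support. Every
  arrow out of v ends where d vanishes, so a line at v is a subrepresentation of every
  representation, and its slope \<mu> v exceeds the slope of the quotient.
*)

theory Submission
  imports Defs
begin

lemma csubspace_zero: "csubspace W n \<Longrightarrow> (\<lambda>i. 0) \<in> W"
  and csubspace_add: "csubspace W n \<Longrightarrow> x \<in> W \<Longrightarrow> y \<in> W \<Longrightarrow> (\<lambda>i. x i + y i) \<in> W"
  and csubspace_scale: "csubspace W n \<Longrightarrow> x \<in> W \<Longrightarrow> (\<lambda>i. c * x i) \<in> W"
  and csubspace_cvecs: "csubspace W n \<Longrightarrow> x \<in> W \<Longrightarrow> x \<in> cvecs n"
  by (auto simp: csubspace_def)

lemma csubspaceI:
  assumes "W \<subseteq> cvecs n" "(\<lambda>i. 0) \<in> W"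
    and "\<And>x y. x \<in> W \<Longrightarrow> y \<in> W \<Longrightarrow> (\<lambda>i. x i + y i) \<in> W"
    and "\<And>c x. x \<in> W \<Longrightarrow> (\<lambda>i. c * x i) \<in> W"
  shows "csubspace W n"
  using assms unfolding csubspace_def by blast

lemma cspan_subset:
  assumes W: "csubspace W n" and "finite S" "S \<subseteq> W"
  shows "cspan S \<subseteq> W"
proof -
  have "(\<lambda>i. \<Sum>s\<in>S. c s * s i) \<in> W" for c
    using \<open>finite S\<close> \<open>S \<subseteq> W\<close>
  proof (induction S rule: finite_induct)
    case empty
    then show ?case using csubspace_zero[OF W] by simp
  next
    case (insert x F)
    then show ?case
      using csubspace_add[OF W csubspace_scale[OF W, of x "c x"], of "\<lambda>i. \<Sum>s\<in>F. c s * s i"]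
      by simp
  qed
  then show ?thesis unfolding cspan_def by blast
qed

lemma csubspace_last_coord_zero:
  assumes "csubspace W (Suc n)"
  shows "csubspace {x \<in> W. x n = 0} n"
proof (rule csubspaceI)
  show "{x \<in> W. x n = 0} \<subseteq> cvecs n"
    using csubspace_cvecs[OF assms] by (auto simp: cvecs_def) (metis le_antisym not_less_eq_eq)
qed (use csubspace_zero csubspace_add csubspace_scale assms in auto)

lemma cspan_insert_pivot:
  assumes W: "csubspace W m" and y: "y \<in> W" "y n \<noteq> 0"
    and S: "{x \<in> W. x n = 0} = cspan S" "finite S" "y \<notin> S"
  shows "W \<subseteq> cspan (insert y S)"
proof
  fix x assume x: "x \<in> W"
  define a where "a = x n / y n"
  have "(\<lambda>i. x i + (- a) * y i) \<in> {x \<in> W. x n = 0}"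
    using csubspace_add[OF W x csubspace_scale[OF W y(1), of "- a"]] y(2) by (simp add: a_def)
  then obtain c where "(\<lambda>i. x i + (- a) * y i) = (\<lambda>i. \<Sum>s\<in>S. c s * s i)"
    unfolding S(1) cspan_def by blast
  then have c: "x i + (- a) * y i = (\<Sum>s\<in>S. c s * s i)" for i by (rule fun_cong)
  have "x i = (\<Sum>s\<in>insert y S. (c(y := a)) s * s i)" for i
  proof -
    have "(\<Sum>s\<in>S. (c(y := a)) s * s i) = (\<Sum>s\<in>S. c s * s i)"
      using S(3) by (intro sum.cong) auto
    then show ?thesis using c[of i] S(2,3) by (simp add: algebra_simps)
  qed
  then show "x \<in> cspan (insert y S)" unfolding cspan_def by blast
qed

(* Needed because cdim is a LEAST over spanning sets, which is junk unless one exists.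
   Induction on n: the vectors of W with vanishing n-th coordinate form a subspace of C^n,
   and one pivot vector of W with nonzero n-th coordinate spans the rest. *)
lemma csubspace_spanning_set:
  "csubspace W n \<Longrightarrow> \<exists>S. finite S \<and> card S \<le> n \<and> S \<subseteq> W \<and> W = cspan S"
proof (induction n arbitrary: W)
  case 0
  then have "W = {\<lambda>i. 0}"
    using csubspace_zero csubspace_cvecs by (fastforce simp: cvecs_def)
  then show ?case by (intro exI[of _ "{}"]) (auto simp: cspan_def)
next
  case (Suc n)
  obtain S where S: "finite S" "card S \<le> n" "S \<subseteq> {x \<in> W. x n = 0}" "{x \<in> W. x n = 0} = cspan S"
    using Suc.IH[OF csubspace_last_coord_zero[OF Suc.prems]] by blast
  show ?case
  proof (cases "\<exists>y\<in>W. y n \<noteq> 0")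
    case False
    then show ?thesis using S by (intro exI[of _ S]) auto
  next
    case True
    then obtain y where y: "y \<in> W" "y n \<noteq> 0" by blast
    with S have "y \<notin> S" by auto
    have "W = cspan (insert y S)"
      using cspan_insert_pivot[OF Suc.prems y S(4,1) \<open>y \<notin> S\<close>]
        cspan_subset[OF Suc.prems, of "insert y S"] S(1,3) y(1) by auto
    with S y \<open>y \<notin> S\<close> show ?thesis by (intro exI[of _ "insert y S"]) auto
  qed
qed

lemma cdim_le_card: "finite S \<Longrightarrow> S \<subseteq> W \<Longrightarrow> W = cspan S \<Longrightarrow> cdim W \<le> card S"
  unfolding cdim_def by (rule Least_le) blast

lemma cdim_le: "csubspace W n \<Longrightarrow> cdim W \<le> n"
  using csubspace_spanning_set cdim_le_card le_trans by meson

lemma cdim_eq_0_imp_trivial: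
  assumes "csubspace W n" "cdim W = 0"
  shows "W = {\<lambda>i. 0}"
proof -
  have "\<exists>k S. finite S \<and> card S = k \<and> S \<subseteq> W \<and> W = cspan S"
    using csubspace_spanning_set[OF assms(1)] by blast
  then have "\<exists>S. finite S \<and> card S = cdim W \<and> S \<subseteq> W \<and> W = cspan S"
    unfolding cdim_def by (rule LeastI_ex)
  then have "W = cspan {}" using assms(2) by auto
  then show ?thesis by (simp add: cspan_def)
qed

lemma csubspace_trivial: "csubspace {\<lambda>i. 0} n"
  by (rule csubspaceI) (auto simp: cvecs_def)

lemma csubspace_cvecs_1: "1 \<le> n \<Longrightarrow> csubspace (cvecs 1) n"
  by (rule csubspaceI) (auto simp: cvecs_def)

lemma cdim_trivial: "cdim {\<lambda>i. 0} = 0"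
  using cdim_le[OF csubspace_trivial[of 0]] by simp

lemma cdim_cvecs_1: "cdim (cvecs 1) = 1"
proof -
  have "(\<lambda>i. if i = 0 then 1 else 0) \<in> cvecs 1" by (simp add: cvecs_def)
  then have "cvecs 1 \<noteq> {\<lambda>i. 0}" by (auto dest!: fun_cong[of _ _ 0])
  then show ?thesis
    using cdim_le[of "cvecs 1" 1] cdim_eq_0_imp_trivial[of "cvecs 1" 1] csubspace_cvecs_1[of 1]
    by linarith
qed

lemma slope_delta: "slope \<mu> (delta v) = \<mu> v"
  by (simp add: slope_def delta_def if_distrib cong: if_cong)

lemma slope_eq_const:
  fixes x :: "'v::finite \<Rightarrow> nat"
  assumes "x \<noteq> (\<lambda>v. 0)" and "\<And>v. x v \<noteq> 0 \<Longrightarrow> \<mu> v = r"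
  shows "slope \<mu> x = r"
proof -
  obtain w where "x w \<noteq> 0" using assms(1) by auto
  then have pos: "(\<Sum>v\<in>UNIV. real (x v)) > 0"
    using member_le_sum[of w UNIV "\<lambda>v. real (x v)"] by fastforce
  have "(\<Sum>v\<in>UNIV. \<mu> v * real (x v)) = r * (\<Sum>v\<in>UNIV. real (x v))"
    unfolding sum_distrib_left using assms(2) by (intro sum.cong) auto
  with pos show ?thesis unfolding slope_def by simp
qed

lemma slope_less_const:
  fixes x :: "'v::finite \<Rightarrow> nat"
  assumes "\<And>v. x v \<noteq> 0 \<Longrightarrow> \<mu> v \<le> r" and "x w \<noteq> 0" "\<mu> w < r"
  shows "slope \<mu> x < r"
proof -
  have pos: "(\<Sum>v\<in>UNIV. real (x v)) > 0"
    using member_le_sum[of w UNIV "\<lambda>v. real (x v)"] assms(2) by fastforce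
  have "(\<Sum>v\<in>UNIV. \<mu> v * real (x v)) < (\<Sum>v\<in>UNIV. r * real (x v))"
  proof (rule sum_strict_mono_ex1)
    show "\<forall>v\<in>UNIV. \<mu> v * real (x v) \<le> r * real (x v)"
      using assms(1) by (metis mult_right_mono of_nat_0 of_nat_0_le_iff mult_zero_right order_refl)
    show "\<exists>v\<in>UNIV. \<mu> v * real (x v) < r * real (x v)"
      using assms(2,3) by (intro bexI[of _ w]) auto
  qed simp
  with pos show ?thesis unfolding slope_def sum_distrib_left[symmetric] by (simp add: pos_divide_less_eq)
qed

lemma delta_nonzero: "delta v \<noteq> (\<lambda>w. 0)"
  by (auto simp: delta_def fun_eq_iff)

lemma dimvec_diff_nonzero:
  fixes x d :: "'v \<Rightarrow> nat"
  assumes "\<And>w. x w \<le> d w" and "x \<noteq> d"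
  shows "(\<lambda>w. d w - x w) \<noteq> (\<lambda>w. 0)"
  using assms by (auto simp: fun_eq_iff intro: le_antisym)

lemma Rep_eq_zero:
  assumes "\<And>e. d (h e) = 0 \<or> d (t e) = 0"
  shows "Rep h t d = {\<lambda>e i j. 0}"
  using assms unfolding Rep_def by (auto intro!: ext) (metis le0)

lemma level_dimvec_no_arrows:
  assumes "increasing_slope h t \<mu>" and "\<forall>v. \<mu> v \<noteq> r \<longrightarrow> d v = 0"
  shows "d (h e) = 0 \<or> d (t e) = 0"
  using assms unfolding increasing_slope_def by (metis less_irrefl)

lemma stable_rep_subrepD:
  "stable_rep h t \<mu> d B \<Longrightarrow> subrep h t d B W \<Longrightarrow> (\<lambda>v. cdim (W v)) \<noteq> (\<lambda>v. 0)
    \<Longrightarrow> (\<lambda>v. cdim (W v)) \<noteq> d \<Longrightarrow> slope \<mu> (\<lambda>v. cdim (W v)) < slope \<mu> (\<lambda>v. d v - cdim (W v))"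
  by (simp add: stable_rep_def)

lemma semistable_rep_subrepD:
  "semistable_rep h t \<mu> d B \<Longrightarrow> subrep h t d B W \<Longrightarrow> (\<lambda>v. cdim (W v)) \<noteq> (\<lambda>v. 0)
    \<Longrightarrow> (\<lambda>v. cdim (W v)) \<noteq> d \<Longrightarrow> slope \<mu> (\<lambda>v. cdim (W v)) \<le> slope \<mu> (\<lambda>v. d v - cdim (W v))"
  by (simp add: semistable_rep_def)

lemma cdim_subrep_le: "subrep h t d B W \<Longrightarrow> cdim (W v) \<le> d v"
  unfolding subrep_def using cdim_le by blast

lemma stable_imp_semistable: "stable_rep h t \<mu> d B \<Longrightarrow> semistable_rep h t \<mu> d B"
  unfolding stable_rep_def semistable_rep_def by (meson less_imp_le)

lemma Mst_subset_Mss: "Mst h t \<mu> d \<subseteq> Mss h t \<mu> d"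
  unfolding Mst_def Mss_def using stable_imp_semistable by blast

definition vertex_line :: "'v \<Rightarrow> 'v \<Rightarrow> (nat \<Rightarrow> complex) set" where
  "vertex_line v w = (if w = v then cvecs 1 else {\<lambda>i. 0})"

lemma cdim_vertex_line: "cdim (vertex_line v w) = delta v w"
  using cdim_cvecs_1 by (simp add: vertex_line_def delta_def cdim_trivial)

lemma subrep_vertex_line:
  assumes "B \<in> Rep h t d" "d v \<noteq> 0" and "\<And>e. t e = v \<Longrightarrow> d (h e) = 0"
  shows "subrep h t d B (vertex_line v)"
  unfolding subrep_def
proof (intro conjI allI ballI)
  fix w show "csubspace (vertex_line v w) (d w)"
    using assms(2) csubspace_cvecs_1 csubspace_trivial by (simp add: vertex_line_def)
next
  fix e x assume x: "x \<in> vertex_line v (t e)"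
  have "mapply (B e) (d (t e)) x = (\<lambda>i. 0)"
  proof (cases "t e = v")
    case True
    then have "B e = (\<lambda>i j. 0)" using assms(1) assms(3)[OF True] unfolding Rep_def by fastforce
    then show ?thesis by (simp add: mapply_def)
  next
    case False
    with x show ?thesis by (simp add: vertex_line_def mapply_def)
  qed
  then show "mapply (B e) (d (t e)) x \<in> vertex_line v (h e)"
    by (simp add: vertex_line_def cvecs_def)
qed

lemma Mst_Mss_delta:
  assumes "increasing_slope h t \<mu>"
  shows "Mst h t \<mu> (delta v) = {\<lambda>e i j. 0}" and "Mss h t \<mu> (delta v) = {\<lambda>e i j. 0}"
proof -
  have "\<forall>w. \<mu> w \<noteq> \<mu> v \<longrightarrow> delta v w = 0" by (simp add: delta_def)
  then have Rep: "Rep h t (delta v) = {\<lambda>e i j. 0}"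
    by (rule Rep_eq_zero[of "delta v" h t, OF level_dimvec_no_arrows[OF assms]])
  have stable: "stable_rep h t \<mu> (delta v) (\<lambda>e i j. 0)"
    unfolding stable_rep_def
  proof (intro conjI allI impI)
    fix W assume W: "subrep h t (delta v) (\<lambda>e i j. 0) W" "(\<lambda>w. cdim (W w)) \<noteq> (\<lambda>w. 0)"
      "(\<lambda>w. cdim (W w)) \<noteq> delta v"
    have le: "cdim (W w) \<le> delta v w" for w by (rule cdim_subrep_le[OF W(1)])
    obtain u where "cdim (W u) \<noteq> 0" using W(2) by auto
    with le[of u] have one: "cdim (W v) = 1" by (cases "u = v") (simp_all add: delta_def)
    have "cdim (W w) = delta v w" for w
      using le[of w] one by (cases "w = v") (simp_all add: delta_def)
    then have "(\<lambda>w. cdim (W w)) = delta v" by blast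
    with W(3) show "slope \<mu> (\<lambda>w. cdim (W w)) < slope \<mu> (\<lambda>w. delta v w - cdim (W w))"
      by contradiction
  qed (use Rep delta_nonzero[of v] in auto)
  show Mst: "Mst h t \<mu> (delta v) = {\<lambda>e i j. 0}" using Rep stable unfolding Mst_def by auto
  have "Mss h t \<mu> (delta v) \<subseteq> Rep h t (delta v)" unfolding Mss_def by blast
  then show "Mss h t \<mu> (delta v) = {\<lambda>e i j. 0}" using Mst_subset_Mss Mst Rep by blast
qed

lemma Mst_Mss_single_level:
  assumes inc: "increasing_slope h t \<mu>" and level: "\<forall>v. \<mu> v \<noteq> r \<longrightarrow> d v = 0"
    and "d \<noteq> (\<lambda>v. 0)" and "\<forall>v. d \<noteq> delta v"
  shows "Mst h t \<mu> d = {}" and "Mss h t \<mu> d = {\<lambda>e i j. 0}"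
proof -
  have Rep: "Rep h t d = {\<lambda>e i j. 0}"
    by (rule Rep_eq_zero[of d h t, OF level_dimvec_no_arrows[OF inc level]])
  have slope_r: "slope \<mu> x = r" if "x \<noteq> (\<lambda>v. 0)" "\<And>v. x v \<le> d v" for x
  proof (rule slope_eq_const[OF that(1)])
    fix v assume "x v \<noteq> 0"
    with that(2)[of v] have "d v \<noteq> 0" by linarith
    with spec[OF level, of v] show "\<mu> v = r" by blast
  qed
  have semistable: "semistable_rep h t \<mu> d (\<lambda>e i j. 0)"
    unfolding semistable_rep_def
  proof (intro conjI allI impI)
    fix W assume W: "subrep h t d (\<lambda>e i j. 0) W" "(\<lambda>w. cdim (W w)) \<noteq> (\<lambda>w. 0)"
      "(\<lambda>w. cdim (W w)) \<noteq> d"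
    have le: "\<And>w. cdim (W w) \<le> d w" by (rule cdim_subrep_le[OF W(1)])
    have "slope \<mu> (\<lambda>w. cdim (W w)) = r" by (rule slope_r[OF W(2) le])
    moreover have "slope \<mu> (\<lambda>w. d w - cdim (W w)) = r"
      by (rule slope_r[OF dimvec_diff_nonzero[OF le W(3)]]) simp
    ultimately show "slope \<mu> (\<lambda>w. cdim (W w)) \<le> slope \<mu> (\<lambda>w. d w - cdim (W w))" by simp
  qed (use Rep assms(3) in simp_all)
  show "Mss h t \<mu> d = {\<lambda>e i j. 0}" using Rep semistable unfolding Mss_def by auto
  obtain v where v: "d v \<noteq> 0" using assms(3) by auto
  have delta_le: "delta v w \<le> d w" for w using v by (simp add: delta_def)
  have "delta v \<noteq> d" using spec[OF assms(4), of v] by (rule not_sym)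
  have "\<not> stable_rep h t \<mu> d (\<lambda>e i j. 0)"
  proof
    assume st: "stable_rep h t \<mu> d (\<lambda>e i j. 0)"
    have sub: "subrep h t d (\<lambda>e i j. 0) (vertex_line v)"
    proof (rule subrep_vertex_line)
      show "d (h e) = 0" if "t e = v" for e
        using level_dimvec_no_arrows[OF inc level, of e] that v by auto
    qed (use Rep v in simp_all)
    have "slope \<mu> (delta v) < slope \<mu> (\<lambda>w. d w - delta v w)"
      using stable_rep_subrepD[OF st sub, unfolded cdim_vertex_line] delta_nonzero[of v]
        \<open>delta v \<noteq> d\<close> by blast
    moreover have "slope \<mu> (delta v) = r" by (rule slope_r[OF delta_nonzero delta_le])
    moreover have "slope \<mu> (\<lambda>w. d w - delta v w) = r"
      by (rule slope_r[OF dimvec_diff_nonzero[OF delta_le \<open>delta v \<noteq> d\<close>]]) simp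
    ultimately show False by simp
  qed
  with Rep show "Mst h t \<mu> d = {}" unfolding Mst_def by auto
qed

lemma chi_self_no_arrows:
  assumes "\<And>e. d (h e) = 0 \<or> d (t e) = 0"
  shows "chi h t d d = 2 * (\<Sum>v\<in>UNIV. int (d v) * int (d v))"
proof -
  have "(\<Sum>e\<in>UNIV. int (d (t e)) * int (d (h e))) = 0"
    using assms by (intro sum.neutral) (metis mult_zero_left mult_zero_right of_nat_0)
  then show ?thesis unfolding chi_def chiQ_def by simp
qed

lemma sum_squares_ge_2:
  fixes d :: "'v::finite \<Rightarrow> nat"
  assumes "d \<noteq> (\<lambda>v. 0)" and "\<forall>v. d \<noteq> delta v"
  shows "2 \<le> (\<Sum>v\<in>UNIV. int (d v) * int (d v))"
proof -
  obtain v where v: "d v \<noteq> 0" using assms(1) by auto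
  obtain w where w: "d w \<noteq> delta v w" using assms(2) by auto
  have "2 \<le> (\<Sum>u\<in>{v, w}. int (d u))"
    using v w by (cases "w = v") (auto simp: delta_def)
  also have "\<dots> \<le> (\<Sum>u\<in>UNIV. int (d u))" by (rule sum_mono2) auto
  also have "\<dots> \<le> (\<Sum>u\<in>UNIV. int (d u) * int (d u))"
    by (rule sum_mono) (metis le_square of_nat_le_iff of_nat_mult)
  finally show ?thesis .
qed

lemma Mss_empty_several_levels:
  assumes inc: "increasing_slope h t \<mu>" and several: "\<nexists>r. \<forall>v. \<mu> v \<noteq> r \<longrightarrow> d v = 0"
  shows "Mss h t \<mu> d = {}"
proof -
  define m where "m = Max (\<mu> ` {v. d v \<noteq> 0})"
  have supp: "finite (\<mu> ` {v. d v \<noteq> 0})" "\<mu> ` {v. d v \<noteq> 0} \<noteq> {}"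
    using several by auto
  obtain v where v: "d v \<noteq> 0" "\<mu> v = m" using Max_in[OF supp] unfolding m_def by auto
  have below: "\<mu> u \<le> m" if "d u \<noteq> 0" for u
    using Max_ge[OF supp(1)] that unfolding m_def by auto
  obtain w where w: "d w \<noteq> 0" "\<mu> w \<noteq> m" using several by auto
  with below have "\<mu> w < m" by fastforce
  have "delta v \<noteq> d"
  proof
    assume "delta v = d"
    with w have "w = v" by (auto simp: delta_def split: if_splits)
    with v w show False by simp
  qed
  have "\<not> semistable_rep h t \<mu> d B" for B
  proof
    assume ss: "semistable_rep h t \<mu> d B"
    have sub: "subrep h t d B (vertex_line v)"
    proof (rule subrep_vertex_line)
      show "B \<in> Rep h t d" using ss unfolding semistable_rep_def by blast
      show "d (h e) = 0" if "t e = v" for e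
      proof (rule ccontr)
        assume "d (h e) \<noteq> 0"
        with below have "\<mu> (h e) \<le> \<mu> v" using v(2) by simp
        with inc that show False unfolding increasing_slope_def by (metis not_le)
      qed
    qed (fact v(1))
    have "slope \<mu> (delta v) \<le> slope \<mu> (\<lambda>u. d u - delta v u)"
      using semistable_rep_subrepD[OF ss sub, unfolded cdim_vertex_line] delta_nonzero[of v]
        \<open>delta v \<noteq> d\<close> by blast
    moreover have "slope \<mu> (\<lambda>u. d u - delta v u) < m"
    proof (rule slope_less_const)
      show "\<mu> u \<le> m" if "d u - delta v u \<noteq> 0" for u using below that by simp
      show "d w - delta v w \<noteq> 0" using w \<open>\<mu> w < m\<close> v(2) by (auto simp: delta_def)
    qed fact
    ultimately show False using v(2) by (simp add: slope_delta)
  qed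
  then show ?thesis unfolding Mss_def by blast
qed

theorem proposition5p1:
  fixes h t :: "'e::finite \<Rightarrow> 'v::finite" and \<mu> :: "'v \<Rightarrow> real" and d :: "'v \<Rightarrow> nat"
  assumes "no_oriented_cycles h t"
    and "increasing_slope h t \<mu>"
    and "d \<noteq> (\<lambda>v. 0)"
  shows "((caseA d \<and> \<not> caseB \<mu> d) \<or> (\<not> caseA d \<and> caseB \<mu> d) \<or> (\<not> caseA d \<and> \<not> caseB \<mu> d))
    \<and> (caseA d \<longrightarrow> Mst h t \<mu> d = Mss h t \<mu> d \<and> (\<exists>B. Mss h t \<mu> d = {B}))
    \<and> (caseB \<mu> d \<longrightarrow> Mst h t \<mu> d = {} \<and> (\<exists>B. Mss h t \<mu> d = {B}) \<and> 2 - chi h t d d < 0)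
    \<and> (\<not> caseA d \<and> \<not> caseB \<mu> d \<longrightarrow> Mst h t \<mu> d = {} \<and> Mss h t \<mu> d = {})"
proof -
  have "\<not> (caseA d \<and> caseB \<mu> d)" unfolding caseA_def caseB_def by blast
  then have exclusive:
    "(caseA d \<and> \<not> caseB \<mu> d) \<or> (\<not> caseA d \<and> caseB \<mu> d) \<or> (\<not> caseA d \<and> \<not> caseB \<mu> d)"
    by blast
  have A: "caseA d \<longrightarrow> Mst h t \<mu> d = Mss h t \<mu> d \<and> (\<exists>B. Mss h t \<mu> d = {B})"
  proof
    assume "caseA d"
    then obtain v where "d = delta v" unfolding caseA_def by blast
    then show "Mst h t \<mu> d = Mss h t \<mu> d \<and> (\<exists>B. Mss h t \<mu> d = {B})"
      using Mst_Mss_delta[OF assms(2), of v] by simp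
  qed
  have B: "caseB \<mu> d \<longrightarrow> Mst h t \<mu> d = {} \<and> (\<exists>B. Mss h t \<mu> d = {B}) \<and> 2 - chi h t d d < 0"
  proof
    assume "caseB \<mu> d"
    then obtain r where level: "\<forall>v. \<mu> v \<noteq> r \<longrightarrow> d v = 0" and nondelta: "\<forall>v. d \<noteq> delta v"
      unfolding caseB_def by blast
    have "chi h t d d = 2 * (\<Sum>v\<in>UNIV. int (d v) * int (d v))"
      by (rule chi_self_no_arrows[of d h t, OF level_dimvec_no_arrows[OF assms(2) level]])
    then have "2 - chi h t d d < 0" using sum_squares_ge_2[OF assms(3) nondelta] by linarith
    with Mst_Mss_single_level[OF assms(2) level assms(3) nondelta]
    show "Mst h t \<mu> d = {} \<and> (\<exists>B. Mss h t \<mu> d = {B}) \<and> 2 - chi h t d d < 0" by blast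
  qed
  have C: "\<not> caseA d \<and> \<not> caseB \<mu> d \<longrightarrow> Mst h t \<mu> d = {} \<and> Mss h t \<mu> d = {}"
  proof
    assume "\<not> caseA d \<and> \<not> caseB \<mu> d"
    then have "\<nexists>r. \<forall>v. \<mu> v \<noteq> r \<longrightarrow> d v = 0" unfolding caseA_def caseB_def by blast
    then have "Mss h t \<mu> d = {}" by (rule Mss_empty_several_levels[OF assms(2)])
    with Mst_subset_Mss show "Mst h t \<mu> d = {} \<and> Mss h t \<mu> d = {}" by blast
  qed
  show ?thesis by (intro conjI exclusive A B C)
qed

end
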